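(* Let $c>0$. Let $\mathcal N_1=\{(M_3,N_1,N_2)\in\mathbb{C}^3: N_1^2+N_2^2=1\}$ carry the system \[ \dot M_3=-N_2,\qquad \dot N_1=cM_3N_2,\qquad \dot N_2=-cM_3N_1. \] For $k\in(0,1]$ let $\Gamma_k^1$ be the complex phase curve given by $\frac12cM_3^2+N_1=2k^2-1$, $N_1^2+N_2^2=1$ (for $k=1$ with the equilibrium $u=(M_3,N_1,N_2)=(0,1,0)$ removed). Let $\Omega_1$ be the closure of the set of real points of $\Gamma_1^1$ (the union of the two real orbits homoclinic to the hyperbolic equilibrium $u$). Then for every complex neighbourhood $U\subset\mathcal N_1$ of $\Omega_1$ there exists $\epsilon>0$ such that for $0<1-k<\epsilon$ the fundamental group $\pi_1(\Gamma_k^1)$ is generated by loops lying in $U$.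
   Context: Here $\mathcal N_1$ is identified with the invariant submanifold $\{(\mathbf M,\mathbf N)\in\mathbb{C}^6: M_1=M_2=N_3=0,\ N_1^2+N_2^2=1\}$ of the complexified Euler–Poisson equations for a symmetric heavy top with principal moments $A=B=1$, $C=1/c$ and $\mathbf L=[1,0,0]^T$; the system above is the restriction to $\mathcal N_1$. For $k\in(0,1)$, $\Gamma_k^1$ is a non-degenerate affine elliptic curve. *)

theory Defs
  imports "HOL-Analysis.Analysis"
begin

definition N1set :: "(complex \<times> complex \<times> complex) set" where
  "N1set = {(m, n1, n2). n1\<^sup>2 + n2\<^sup>2 = 1}"

definition Gamma :: "real \<Rightarrow> real \<Rightarrow> (complex \<times> complex \<times> complex) set" where
  "Gamma c k = {(m, n1, n2). complex_of_real c / 2 * m\<^sup>2 + n1 = complex_of_real (2 * k\<^sup>2 - 1)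
                              \<and> n1\<^sup>2 + n2\<^sup>2 = 1}
               - (if k = 1 then {(0, 1, 0)} else {})"

definition Omega1 :: "real \<Rightarrow> (complex \<times> complex \<times> complex) set" where
  "Omega1 c = closure {(m, n1, n2) \<in> Gamma c 1. m \<in> \<real> \<and> n1 \<in> \<real> \<and> n2 \<in> \<real>}"

inductive_set loop_words :: "'a::topological_space set \<Rightarrow> 'a \<Rightarrow> (real \<Rightarrow> 'a) set"
  for V :: "'a set" and p :: 'a where
  base: "\<lbrakk>path g; path_image g \<subseteq> V; pathstart g = p; pathfinish g = p\<rbrakk> \<Longrightarrow> g \<in> loop_words V p"
| join: "\<lbrakk>g \<in> loop_words V p; h \<in> loop_words V p\<rbrakk> \<Longrightarrow> g +++ h \<in> loop_words V p"
| rev: "g \<in> loop_words V p \<Longrightarrow> reversepath g \<in> loop_words V p"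

definition pi1_generated_by :: "'a::topological_space set \<Rightarrow> 'a set \<Rightarrow> bool" where
  "pi1_generated_by S V \<longleftrightarrow>
     (\<exists>p\<in>V. \<forall>g. path g \<and> path_image g \<subseteq> S \<and> pathstart g = p \<and> pathfinish g = p
                 \<longrightarrow> (\<exists>h\<in>loop_words V p. homotopic_paths S g h))"

end

theory Submission
  imports Defs
begin

text \<open>Over the \<open>M3\<close>-plane, \<open>Gamma_k^1\<close> is the double cover \<open>N2 = \<plusminus>sqrt (1 - N1\<^sup>2)\<close> with
  \<open>N1 = 2 k\<^sup>2 - 1 - c M3\<^sup>2 / 2\<close>, branched where \<open>N1 = \<plusminus>1\<close>. These branch points lie inside a
  rectangle \<open>R_k\<close> of height \<open>O(sqrt (1 - k))\<close>. The straight-line homotopy from the identity to the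
  clamping onto \<open>R_k\<close> never moves a point from outside \<open>R_k\<close> into its interior, so it avoids the
  branch points and lifts to a deformation of \<open>Gamma_k^1\<close> that fixes the part over \<open>R_k\<close> and pushes
  every loop into this compact core. As \<open>k \<rightarrow> 1\<close> the cores converge to the real points of
  \<open>Gamma_1^1\<close> over \<open>[-2 / sqrt c, 2 / sqrt c]\<close>, which make up \<open>Omega_1\<close>; by compactness they
  eventually lie in any neighbourhood of \<open>Omega_1\<close>.\<close>

section \<open>Clamping onto a box\<close>

definition clamp_homotopy :: "'a::euclidean_space \<Rightarrow> 'a \<Rightarrow> real \<Rightarrow> 'a \<Rightarrow> 'a" where
  "clamp_homotopy a b t x = (1 - t) *\<^sub>R x + t *\<^sub>R clamp a b x"

lemma clamp_homotopy_0 [simp]: "clamp_homotopy a b 0 x = x"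
  by (simp add: clamp_homotopy_def)

lemma clamp_homotopy_1 [simp]: "clamp_homotopy a b 1 x = clamp a b x"
  by (simp add: clamp_homotopy_def)

lemma clamp_homotopy_cbox [simp]: "x \<in> cbox a b \<Longrightarrow> clamp_homotopy a b t x = x"
  by (simp add: clamp_homotopy_def algebra_simps)

lemma inner_clamp:
  assumes "\<forall>i\<in>Basis. a \<bullet> i \<le> b \<bullet> i" "i \<in> Basis"
  shows "clamp a b x \<bullet> i =
    (if x \<bullet> i < a \<bullet> i then a \<bullet> i else if x \<bullet> i \<le> b \<bullet> i then x \<bullet> i else b \<bullet> i)"
  using assms unfolding clamp_def by simp

lemma clamp_homotopy_in_box_imp_in_cbox:
  fixes x :: "'a::euclidean_space"
  assumes t: "0 \<le> t" "t \<le> 1" and box: "clamp_homotopy a b t x \<in> box a b"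
  shows "x \<in> cbox a b"
proof -
  have ab: "\<forall>i\<in>Basis. a \<bullet> i \<le> b \<bullet> i"
    using box box_ne_empty(2)[of a b] by (auto intro: less_imp_le)
  show ?thesis unfolding mem_box
  proof
    fix i :: 'a assume i: "i \<in> Basis"
    have "a \<bullet> i < clamp_homotopy a b t x \<bullet> i" "clamp_homotopy a b t x \<bullet> i < b \<bullet> i"
      using box i by (auto simp: mem_box)
    then have "a \<bullet> i < (1 - t) * (x \<bullet> i) + t * (clamp a b x \<bullet> i)"
      "(1 - t) * (x \<bullet> i) + t * (clamp a b x \<bullet> i) < b \<bullet> i"
      by (simp_all add: clamp_homotopy_def inner_add_left)
    with t show "a \<bullet> i \<le> x \<bullet> i \<and> x \<bullet> i \<le> b \<bullet> i"
      unfolding inner_clamp[OF ab i]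
      by (cases "x \<bullet> i < a \<bullet> i"; cases "b \<bullet> i < x \<bullet> i")
         (use mult_left_mono[of "x \<bullet> i" "a \<bullet> i" "1 - t"] mult_left_mono[of "b \<bullet> i" "x \<bullet> i" "1 - t"]
           in \<open>auto simp: algebra_simps\<close>)
  qed
qed

lemma continuous_on_clamp_homotopy:
  "continuous_on S (\<lambda>(t, x). clamp_homotopy a b t (x::'a::euclidean_space))"
proof -
  have "continuous_on UNIV (clamp a b)"
    using clamp_continuous_on[of a b id UNIV] by simp
  then have "continuous_on S (\<lambda>y. clamp a b (snd y))"
    by (rule continuous_on_compose2) (auto intro: continuous_intros)
  then show ?thesis
    unfolding clamp_homotopy_def case_prod_beta by (intro continuous_intros)
qed

lemma mem_symmetric_cbox_complex: "m \<in> cbox (- z) z \<longleftrightarrow> \<bar>Re m\<bar> \<le> Re z \<and> \<bar>Im m\<bar> \<le> Im z"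
  by (auto simp: mem_box Basis_complex_def abs_le_iff)

lemma mem_symmetric_box_complex: "m \<in> box (- z) z \<longleftrightarrow> \<bar>Re m\<bar> < Re z \<and> \<bar>Im m\<bar> < Im z"
  by (auto simp: mem_box Basis_complex_def abs_less_iff)

section \<open>Deforming a space into a subspace\<close>

lemma pi1_generated_by_deformation:
  fixes H :: "real \<times> 'a::topological_space \<Rightarrow> 'a"
  assumes cont: "continuous_on ({0..1} \<times> S) H" and into: "H ` ({0..1} \<times> S) \<subseteq> S"
    and start: "\<And>x. x \<in> S \<Longrightarrow> H (0, x) = x" and finish: "\<And>x. x \<in> S \<Longrightarrow> H (1, x) \<in> V"
    and p: "p \<in> S" and fixed: "\<And>t. t \<in> {0..1} \<Longrightarrow> H (t, p) = p"
  shows "pi1_generated_by S V"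
  unfolding pi1_generated_by_def
proof (intro bexI[of _ p] allI impI, elim conjE)
  show "p \<in> V" using finish[OF p] fixed[of 1] by simp
  fix g assume g: "path g" "path_image g \<subseteq> S" "pathstart g = p" "pathfinish g = p"
  have gS: "g s \<in> S" if "s \<in> {0..1}" for s
    using g(2) that by (auto simp: path_image_def)
  define G where "G = (\<lambda>y. H (fst y, g (snd y)))"
  have "continuous_on ({0..1} \<times> {0..1}) (\<lambda>y::real \<times> real. (fst y, g (snd y)))"
    using g(1) unfolding path_def
    by (intro continuous_intros continuous_on_compose2[OF _ continuous_on_snd]) auto
  then have "continuous_on ({0..1} \<times> {0..1}) G"
    unfolding G_def by (rule continuous_on_compose2[OF cont]) (auto simp: gS)
  with into g(3,4) fixed have hom: "homotopic_paths S g (\<lambda>s. H (1, g s))"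
    unfolding homotopic_paths
    by (auto intro!: exI[of _ G] simp: G_def gS start pathstart_def pathfinish_def)
  moreover have "(\<lambda>s. H (1, g s)) \<in> loop_words V p"
  proof (rule loop_words.base)
    show "path (\<lambda>s. H (1, g s))" using homotopic_paths_imp_path[OF hom] by simp
    show "path_image (\<lambda>s. H (1, g s)) \<subseteq> V" using finish gS by (auto simp: path_image_def)
    show "pathstart (\<lambda>s. H (1, g s)) = p" "pathfinish (\<lambda>s. H (1, g s)) = p"
      using g(3,4) fixed[of 1] by (auto simp: pathstart_def pathfinish_def)
  qed
  ultimately show "\<exists>h\<in>loop_words V p. homotopic_paths S g h" by blast
qed

lemma fibres_near_subset_open:
  fixes Q :: "('a::metric_space \<times> 'b::topological_space) set"
  assumes Q: "compact Q" and U: "open U" and x0: "Q `` {x0} \<subseteq> U"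
  shows "\<exists>\<epsilon>>0. \<forall>x. dist x x0 < \<epsilon> \<longrightarrow> Q `` {x} \<subseteq> U"
proof -
  define B where "B = fst ` (Q \<inter> UNIV \<times> - U)"
  have "compact (Q \<inter> UNIV \<times> - U)" using Q U by (intro compact_Int_closed closed_Times) auto
  then have "open (- B)"
    unfolding B_def by (intro open_Compl compact_imp_closed compact_continuous_image continuous_intros)
  moreover have "x0 \<in> - B" using x0 by (auto simp: B_def)
  ultimately obtain \<epsilon> where "\<epsilon> > 0" "ball x0 \<epsilon> \<subseteq> - B" by (meson open_contains_ball)
  have "y \<in> U" if "dist x x0 < \<epsilon>" "(x, y) \<in> Q" for x y
  proof (rule ccontr)
    assume "y \<notin> U"
    with that(2) have "x \<in> B" unfolding B_def by (intro rev_image_eqI[of "(x, y)"]) auto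
    with that(1) \<open>ball x0 \<epsilon> \<subseteq> - B\<close> show False by (auto simp: dist_commute)
  qed
  with \<open>\<epsilon> > 0\<close> show ?thesis by blast
qed

section \<open>Lifting deformations to a double cover\<close>

definition unit_cut :: "complex set" where
  "unit_cut = {w. Im w = 0 \<and> \<bar>Re w\<bar> \<le> 1}"

lemma closed_unit_cut: "closed unit_cut"
  unfolding unit_cut_def by (intro closed_Collect_conj closed_Collect_eq closed_Collect_le continuous_intros)

lemma nonzero_if_notin_unit_cut: "w \<notin> unit_cut \<Longrightarrow> w \<noteq> 0"
  by (auto simp: unit_cut_def)

text \<open>A branch of \<open>sqrt (w\<^sup>2 - 1)\<close> that is continuous off \<open>[-1, 1]\<close>: for \<open>w \<noteq> 0\<close>, \<open>1 - 1 / w\<^sup>2\<close> is a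
  nonpositive real, i.e. on the branch cut of \<open>csqrt\<close>, exactly when \<open>w \<in> [-1, 1]\<close>.\<close>
definition sqrt_sq_minus_one :: "complex \<Rightarrow> complex" where
  "sqrt_sq_minus_one w = w * csqrt (1 - 1 / w\<^sup>2)"

lemma power2_sqrt_sq_minus_one: "w \<noteq> 0 \<Longrightarrow> (sqrt_sq_minus_one w)\<^sup>2 = w\<^sup>2 - 1"
  by (simp add: sqrt_sq_minus_one_def power_mult_distrib right_diff_distrib)

lemma sqrt_sq_minus_one_nonzero:
  assumes "w \<notin> unit_cut" shows "sqrt_sq_minus_one w \<noteq> 0"
proof
  assume "sqrt_sq_minus_one w = 0"
  then have "w\<^sup>2 = 1"
    using power2_sqrt_sq_minus_one[OF nonzero_if_notin_unit_cut[OF assms]] by simp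
  then show False using assms by (auto simp: power2_eq_1_iff unit_cut_def)
qed

lemma one_minus_inverse_square_notin_nonpos_Reals:
  assumes w: "w \<notin> unit_cut" shows "1 - 1 / w\<^sup>2 \<notin> \<real>\<^sub>\<le>\<^sub>0"
proof
  assume "1 - 1 / w\<^sup>2 \<in> \<real>\<^sub>\<le>\<^sub>0"
  then obtain r where r: "1 / w\<^sup>2 = of_real r" "1 \<le> r"
    by (auto simp: complex_nonpos_Reals_iff complex_eq_iff intro: exI[of _ "Re (1 / w\<^sup>2)"])
  have "w\<^sup>2 = of_real (1 / r)"
    using r nonzero_if_notin_unit_cut[OF w] by (simp add: field_simps)
  then have prod: "2 * Re w * Im w = 0" and diff: "(Re w)\<^sup>2 - (Im w)\<^sup>2 = 1 / r"
    by (simp_all add: complex_eq_iff Re_power2 Im_power2)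
  have "Im w = 0"
  proof (rule ccontr)
    assume "Im w \<noteq> 0"
    with prod diff have "- (Im w)\<^sup>2 = 1 / r" by simp
    with r(2) show False by (smt (verit) zero_le_power2 divide_pos_pos)
  qed
  moreover have "(Re w)\<^sup>2 \<le> 1" using diff r(2) \<open>Im w = 0\<close> by simp
  ultimately show False using w by (simp add: unit_cut_def abs_square_le_1)
qed

lemma continuous_on_sqrt_sq_minus_one: "continuous_on (- unit_cut) sqrt_sq_minus_one"
proof -
  have "continuous_on (- unit_cut) (\<lambda>w. csqrt (1 - 1 / w\<^sup>2))"
    by (rule continuous_on_compose2[OF continuous_on_csqrt])
       (auto intro!: continuous_intros dest: nonzero_if_notin_unit_cut
             one_minus_inverse_square_notin_nonpos_Reals)
  then show ?thesis unfolding sqrt_sq_minus_one_def by (intro continuous_intros)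
qed

definition double_cover :: "(complex \<Rightarrow> complex) \<Rightarrow> (complex \<times> complex \<times> complex) set" where
  "double_cover f = {(m, n1, n2). n1 = f m \<and> n1\<^sup>2 + n2\<^sup>2 = 1}"

locale cover_deformation =
  fixes f :: "complex \<Rightarrow> complex" and \<phi> :: "real \<Rightarrow> complex \<Rightarrow> complex" and K :: "complex set"
  assumes continuous_f: "continuous_on UNIV f"
    and continuous_\<phi>: "continuous_on UNIV (\<lambda>(t, m). \<phi> t m)"
    and open_K: "open K"
    and \<phi>_0: "\<phi> 0 m = m"
    and \<phi>_fixes_K: "m \<in> K \<Longrightarrow> \<phi> t m = m"
    and \<phi>_enters_K_only_fixed: "0 \<le> t \<Longrightarrow> t \<le> 1 \<Longrightarrow> \<phi> t m \<in> K \<Longrightarrow> \<phi> t m = m"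
    and cut_preimage_in_K: "f m \<in> unit_cut \<Longrightarrow> m \<in> K"
begin

lemma \<phi>_avoids_cut: "f m \<notin> unit_cut \<Longrightarrow> 0 \<le> t \<Longrightarrow> t \<le> 1 \<Longrightarrow> f (\<phi> t m) \<notin> unit_cut"
  using cut_preimage_in_K \<phi>_enters_K_only_fixed by metis

text \<open>The second coordinate follows \<open>\<phi>\<close> through \<open>f\<close>; the third is rescaled by the ratio of the
  branches of \<open>sqrt (n1\<^sup>2 - 1)\<close>, which preserves \<open>n1\<^sup>2 + n2\<^sup>2 = 1\<close>. Over the cut, where the ratio is
  undefined, \<open>\<phi>\<close> does not move the point anyway.\<close>
definition lift :: "real \<Rightarrow> complex \<times> complex \<times> complex \<Rightarrow> complex \<times> complex \<times> complex" where
  "lift t = (\<lambda>(m, n1, n2). if n1 \<in> unit_cut then (m, n1, n2)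
     else (\<phi> t m, f (\<phi> t m), n2 * sqrt_sq_minus_one (f (\<phi> t m)) / sqrt_sq_minus_one n1))"

lemma lift_fixes_K: "p \<in> double_cover f \<Longrightarrow> fst p \<in> K \<Longrightarrow> lift t p = p"
  by (auto simp: lift_def double_cover_def \<phi>_fixes_K sqrt_sq_minus_one_nonzero)

lemma lift_0: "p \<in> double_cover f \<Longrightarrow> lift 0 p = p"
  by (auto simp: lift_def double_cover_def \<phi>_0 sqrt_sq_minus_one_nonzero)

lemma fst_lift: "p \<in> double_cover f \<Longrightarrow> fst (lift t p) = \<phi> t (fst p)"
  by (auto simp: lift_def double_cover_def \<phi>_fixes_K cut_preimage_in_K)

lemma lift_in_double_cover:
  assumes t: "0 \<le> t" "t \<le> 1" and p: "p \<in> double_cover f"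
  shows "lift t p \<in> double_cover f"
proof -
  obtain m n2 where p_eq: "p = (m, f m, n2)" and n2: "n2\<^sup>2 = 1 - (f m)\<^sup>2"
    using p by (auto simp: double_cover_def algebra_simps)
  show ?thesis
  proof (cases "f m \<in> unit_cut")
    case True
    then show ?thesis using p by (simp add: lift_def p_eq)
  next
    case False
    define n1' where "n1' = f (\<phi> t m)"
    have "n1' \<notin> unit_cut" using \<phi>_avoids_cut[OF False t] by (simp add: n1'_def)
    then have "(sqrt_sq_minus_one n1')\<^sup>2 = n1'\<^sup>2 - 1"
      by (simp add: power2_sqrt_sq_minus_one nonzero_if_notin_unit_cut)
    moreover have "(sqrt_sq_minus_one (f m))\<^sup>2 = (f m)\<^sup>2 - 1" and nz: "(f m)\<^sup>2 - 1 \<noteq> 0"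
      using False power2_sqrt_sq_minus_one[of "f m"] sqrt_sq_minus_one_nonzero[of "f m"]
      by (auto simp: nonzero_if_notin_unit_cut)
    ultimately have "(n2 * sqrt_sq_minus_one n1' / sqrt_sq_minus_one (f m))\<^sup>2
        = (1 - (f m)\<^sup>2) * (n1'\<^sup>2 - 1) / ((f m)\<^sup>2 - 1)"
      by (simp add: power_mult_distrib power_divide n2)
    also have "\<dots> = 1 - n1'\<^sup>2"
      using nz by (simp add: field_simps)
    finally have "n1'\<^sup>2 + (n2 * sqrt_sq_minus_one n1' / sqrt_sq_minus_one (f m))\<^sup>2 = 1"
      by simp
    then show ?thesis using False by (simp add: lift_def p_eq double_cover_def n1'_def)
  qed
qed

lemma continuous_on_lift: "continuous_on ({0..1} \<times> double_cover f) (\<lambda>(t, p). lift t p)"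
proof -
  define X where "X = {0..1::real} \<times> double_cover f"
  define X_off_cut where "X_off_cut = X \<inter> (\<lambda>x. fst (snd (snd x))) -` (- unit_cut)"
  define X_over_K where "X_over_K = X \<inter> (\<lambda>x. fst (snd x)) -` K"
  have X_eq: "X = X_off_cut \<union> X_over_K"
    by (auto simp: X_def X_off_cut_def X_over_K_def double_cover_def cut_preimage_in_K)
  have "openin (top_of_set X) X_off_cut"
    unfolding X_off_cut_def using closed_unit_cut
    by (intro openin_open_Int continuous_open_vimage continuous_intros) auto
  moreover have "openin (top_of_set X) X_over_K"
    unfolding X_over_K_def using open_K
    by (intro openin_open_Int continuous_open_vimage continuous_intros) auto
  moreover have "continuous_on X_off_cut (\<lambda>(t, p). lift t p)"
  proof -
    define \<psi> where "\<psi> = (\<lambda>x::real \<times> complex \<times> complex \<times> complex. \<phi> (fst x) (fst (snd x)))"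
    have cont_\<psi>: "continuous_on X_off_cut \<psi>"
      unfolding \<psi>_def using continuous_on_compose2[OF continuous_\<phi>, of X_off_cut "\<lambda>x. (fst x, fst (snd x))"]
      by (simp add: continuous_intros)
    have cont_f\<psi>: "continuous_on X_off_cut (\<lambda>x. f (\<psi> x))"
      by (rule continuous_on_compose2[OF continuous_f cont_\<psi>]) auto
    have "f (\<psi> x) \<notin> unit_cut" if "x \<in> X_off_cut" for x
      using that \<phi>_avoids_cut by (auto simp: X_off_cut_def X_def double_cover_def \<psi>_def)
    then have "continuous_on X_off_cut (\<lambda>x. sqrt_sq_minus_one (f (\<psi> x)))"
      by (intro continuous_on_compose2[OF continuous_on_sqrt_sq_minus_one cont_f\<psi>]) auto
    moreover have "continuous_on X_off_cut (\<lambda>x. sqrt_sq_minus_one (fst (snd (snd x))))"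
      by (rule continuous_on_compose2[OF continuous_on_sqrt_sq_minus_one])
         (auto simp: X_off_cut_def intro!: continuous_intros)
    ultimately have "continuous_on X_off_cut (\<lambda>x. (\<psi> x, f (\<psi> x),
        snd (snd (snd x)) * sqrt_sq_minus_one (f (\<psi> x)) / sqrt_sq_minus_one (fst (snd (snd x)))))"
      using cont_\<psi> cont_f\<psi>
      by (intro continuous_intros) (auto simp: X_off_cut_def sqrt_sq_minus_one_nonzero)
    then show ?thesis
      by (rule continuous_on_eq) (auto simp: X_off_cut_def lift_def \<psi>_def)
  qed
  moreover have "continuous_on X_over_K (\<lambda>(t, p). lift t p)"
    by (rule continuous_on_eq[OF continuous_on_snd[OF continuous_on_id]])
       (auto simp: X_over_K_def X_def lift_fixes_K)
  ultimately have "continuous_on X (\<lambda>(t, p). lift t p)"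
    unfolding X_eq by (intro continuous_on_Un_local_open) (auto simp: X_eq[symmetric])
  then show ?thesis by (simp add: X_def)
qed

lemma pi1_generated_by_lift:
  assumes "p \<in> double_cover f" "fst p \<in> K" "\<And>q. q \<in> double_cover f \<Longrightarrow> lift 1 q \<in> V"
  shows "pi1_generated_by (double_cover f) V"
  using assms
  by (intro pi1_generated_by_deformation[where H = "\<lambda>(t, p). lift t p" and p = p])
     (auto intro: continuous_on_lift lift_in_double_cover simp: lift_0 lift_fixes_K)

end

section \<open>The level curves near \<open>k = 1\<close>\<close>

lemma quadratic_cut_preimage_in_box:
  fixes a c :: real
  assumes c: "c > 0" and z: "0 < Re z" "0 < Im z" "2 * (1 + a) / c < (Re z)\<^sup>2" "2 * (1 - a) / c < (Im z)\<^sup>2"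
    and cut: "of_real a - of_real c / 2 * m\<^sup>2 \<in> unit_cut"
  shows "m \<in> box (- z) z"
proof -
  have "c * Re m * Im m = 0" and re: "\<bar>a - c / 2 * ((Re m)\<^sup>2 - (Im m)\<^sup>2)\<bar> \<le> 1"
    using cut by (simp_all add: unit_cut_def Re_power2 Im_power2)
  then consider "Im m = 0" | "Re m = 0" using c by auto
  then show ?thesis
  proof cases
    case 1
    with re c have "(Re m)\<^sup>2 \<le> 2 * (1 + a) / c" by (simp add: field_simps)
    with z have "\<bar>Re m\<bar> < Re z" by (simp add: power2_less_imp_less abs_le_square_iff[symmetric])
    with 1 z show ?thesis by (simp add: mem_symmetric_box_complex)
  next
    case 2
    with re c have "(Im m)\<^sup>2 \<le> 2 * (1 - a) / c" by (simp add: field_simps)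
    with z have "\<bar>Im m\<bar> < Im z" by (simp add: power2_less_imp_less abs_le_square_iff[symmetric])
    with 2 z show ?thesis by (simp add: mem_symmetric_box_complex)
  qed
qed

text \<open>Unlike \<^const>\<open>Gamma\<close>, this keeps the equilibrium for \<open>k = 1\<close>, so that the curves form a
  closed family in \<open>k\<close>.\<close>
definition level_curve :: "real \<Rightarrow> real \<Rightarrow> (complex \<times> complex \<times> complex) set" where
  "level_curve c k = double_cover (\<lambda>m. of_real (2 * k\<^sup>2 - 1) - of_real c / 2 * m\<^sup>2)"

lemma Gamma_eq_level_curve: "k \<noteq> 1 \<Longrightarrow> Gamma c k = level_curve c k"
  by (auto simp: Gamma_def level_curve_def double_cover_def algebra_simps)

lemma level_curve_subset_N1set: "level_curve c k \<subseteq> N1set"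
  by (auto simp: level_curve_def double_cover_def N1set_def)

text \<open>The corner of a rectangle whose interior contains the branch points of \<open>Gamma c k\<close>; as
  \<open>k \<rightarrow> 1\<close> the rectangle shrinks to the real segment \<open>[-2 / sqrt c, 2 / sqrt c]\<close> over which
  \<open>Omega1 c\<close> lies.\<close>
definition corner :: "real \<Rightarrow> real \<Rightarrow> complex" where
  "corner c k = Complex (sqrt (4 / c) + sqrt (8 * (1 - k\<^sup>2) / c)) (sqrt (8 * (1 - k\<^sup>2) / c))"

definition core :: "real \<Rightarrow> real \<Rightarrow> (complex \<times> complex \<times> complex) set" where
  "core c k = {p \<in> level_curve c k. fst p \<in> cbox (- corner c k) (corner c k)}"

lemma corner_pos:
  assumes "c > 0" "k\<^sup>2 < 1" shows "0 < Re (corner c k)" "0 < Im (corner c k)"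
  using assms by (simp_all add: corner_def add_pos_nonneg)

lemma cut_preimage_in_box_corner:
  assumes c: "c > 0" and k: "k\<^sup>2 < 1"
    and cut: "of_real (2 * k\<^sup>2 - 1) - of_real c / 2 * m\<^sup>2 \<in> unit_cut"
  shows "m \<in> box (- corner c k) (corner c k)"
proof (rule quadratic_cut_preimage_in_box[OF c corner_pos[OF c k] _ _ cut])
  have "sqrt (2 * (1 + (2 * k\<^sup>2 - 1)) / c) \<le> sqrt (4 / c)"
    using c k by (intro real_sqrt_le_mono) (simp add: divide_right_mono)
  also have "\<dots> < Re (corner c k)" using c k by (simp add: corner_def)
  finally have "(sqrt (2 * (1 + (2 * k\<^sup>2 - 1)) / c))\<^sup>2 < (Re (corner c k))\<^sup>2"
    using c by (intro power_strict_mono) auto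
  then show "2 * (1 + (2 * k\<^sup>2 - 1)) / c < (Re (corner c k))\<^sup>2" using c by simp
  show "2 * (1 - (2 * k\<^sup>2 - 1)) / c < (Im (corner c k))\<^sup>2"
    using c k by (simp add: corner_def divide_strict_right_mono)
qed

lemma pi1_Gamma_generated_by_core:
  assumes c: "c > 0" and k: "0 < k" "k < 1" and W: "core c k \<subseteq> W"
  shows "pi1_generated_by (Gamma c k) W"
proof -
  define f where "f = (\<lambda>m::complex. of_real (2 * k\<^sup>2 - 1) - of_real c / 2 * m\<^sup>2)"
  define z where "z = corner c k"
  have k2: "k\<^sup>2 < 1" using k by (simp add: power_less_one_iff)
  have z: "0 < Re z" "0 < Im z" using corner_pos[OF c k2] by (simp_all add: z_def)
  interpret cover_deformation f "clamp_homotopy (- z) z" "box (- z) z"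
  proof
    show "continuous_on UNIV (\<lambda>(t, m). clamp_homotopy (- z) z t m)"
      by (rule continuous_on_clamp_homotopy)
  qed (use c k2 in \<open>auto simp: f_def z_def cut_preimage_in_box_corner intro!: continuous_intros
        dest: clamp_homotopy_in_box_imp_in_cbox simp: clamp_homotopy_cbox[OF subsetD[OF box_subset_cbox]]\<close>)
  have "pi1_generated_by (double_cover f) W"
  proof (rule pi1_generated_by_lift)
    show "(0, f 0, csqrt (1 - (f 0)\<^sup>2)) \<in> double_cover f"
      by (simp add: double_cover_def)
    show "fst (0, f 0, csqrt (1 - (f 0)\<^sup>2)) \<in> box (- z) z"
      using z by (simp add: mem_symmetric_box_complex)
  next
    fix q assume q: "q \<in> double_cover f"
    have "clamp (- z) z (fst q) \<in> cbox (- z) z"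
      using z by (intro clamp_in_interval) (auto simp: Basis_complex_def)
    then have "lift 1 q \<in> core c k"
      using lift_in_double_cover[OF _ _ q, of 1] fst_lift[OF q, of 1]
      by (simp add: core_def level_curve_def f_def z_def)
    with W show "lift 1 q \<in> W" by blast
  qed
  then show ?thesis using k by (simp add: Gamma_eq_level_curve level_curve_def f_def)
qed

lemma level_curve_one_fibre_over_Reals:
  assumes c: "c > 0" and u: "c * u\<^sup>2 \<le> 4" and p: "(of_real u, n1, n2) \<in> level_curve c 1"
  shows "n1 = of_real (1 - c * u\<^sup>2 / 2)" "n2 \<in> \<real>"
proof -
  define \<nu> where "\<nu> = 1 - c * u\<^sup>2 / 2"
  show n1: "n1 = of_real (1 - c * u\<^sup>2 / 2)"
    using p by (simp add: level_curve_def double_cover_def)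
  have "0 \<le> c * u\<^sup>2" using c by simp
  with u have "\<bar>\<nu>\<bar> \<le> 1" by (simp add: \<nu>_def abs_le_iff)
  then have "0 \<le> 1 - \<nu>\<^sup>2" by (simp add: abs_square_le_1)
  have "n2\<^sup>2 = 1 - n1\<^sup>2"
    using p by (simp add: level_curve_def double_cover_def algebra_simps)
  also have "\<dots> = of_real (1 - \<nu>\<^sup>2)" by (simp add: n1 \<nu>_def)
  also have "\<dots> = (of_real (sqrt (1 - \<nu>\<^sup>2)))\<^sup>2"
    using \<open>0 \<le> 1 - \<nu>\<^sup>2\<close> by (simp flip: of_real_power)
  finally have "n2\<^sup>2 = (of_real (sqrt (1 - \<nu>\<^sup>2)))\<^sup>2" .
  then have "n2 = of_real (sqrt (1 - \<nu>\<^sup>2)) \<or> n2 = - of_real (sqrt (1 - \<nu>\<^sup>2))"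
    by (simp add: power2_eq_iff)
  then show "n2 \<in> \<real>" by auto
qed

lemma Gamma_one_eq: "Gamma c 1 = level_curve c 1 - {(0, 1, 0)}"
  by (auto simp: Gamma_def level_curve_def double_cover_def algebra_simps)

lemma real_point_in_Omega1:
  assumes c: "c > 0" and u: "c * u\<^sup>2 \<le> 4" and p: "(of_real u, n1, n2) \<in> level_curve c 1"
    and ne: "(of_real u, n1, n2) \<noteq> (0, 1, 0)"
  shows "(of_real u, n1, n2) \<in> Omega1 c"
proof -
  have "(of_real u, n1, n2) \<in> Gamma c 1" using p ne by (simp add: Gamma_one_eq)
  moreover have "n1 \<in> \<real>" "n2 \<in> \<real>" using level_curve_one_fibre_over_Reals[OF c u p] by auto
  ultimately show ?thesis
    unfolding Omega1_def by (intro closure_subset[THEN subsetD]) simp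
qed

lemma equilibrium_in_Omega1:
  assumes c: "c > 0" shows "(0, 1, 0) \<in> Omega1 c"
proof -
  define \<gamma> where "\<gamma> = (\<lambda>u::real. (complex_of_real u, complex_of_real (1 - c * u\<^sup>2 / 2),
    complex_of_real (sqrt (1 - (1 - c * u\<^sup>2 / 2)\<^sup>2))))"
  have "\<gamma> u \<in> Omega1 c" if u: "0 < u" "u < sqrt (4 / c)" for u
  proof -
    have "u\<^sup>2 < (sqrt (4 / c))\<^sup>2" using u by (intro power_strict_mono) auto
    then have "u\<^sup>2 < 4 / c" using c by simp
    then have "0 < c * u\<^sup>2" "c * u\<^sup>2 < 4" using c u by (simp_all add: field_simps)
    then have "(1 - c * u\<^sup>2 / 2)\<^sup>2 \<le> 1" by (simp add: abs_square_le_1 abs_le_iff)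
    then have "(1 - c * u\<^sup>2 / 2)\<^sup>2 + (sqrt (1 - (1 - c * u\<^sup>2 / 2)\<^sup>2))\<^sup>2 = 1" by simp
    then have "(complex_of_real (1 - c * u\<^sup>2 / 2))\<^sup>2 + (complex_of_real (sqrt (1 - (1 - c * u\<^sup>2 / 2)\<^sup>2)))\<^sup>2 = 1"
      by (metis of_real_add of_real_power of_real_1)
    then have "\<gamma> u \<in> level_curve c 1"
      by (simp add: \<gamma>_def level_curve_def double_cover_def algebra_simps)
    then show ?thesis
      using real_point_in_Omega1[OF c] \<open>c * u\<^sup>2 < 4\<close> u by (simp add: \<gamma>_def)
  qed
  then have "\<forall>\<^sub>F u in at_right 0. \<gamma> u \<in> Omega1 c"
    using c unfolding eventually_at_right_field by (intro exI[of _ "sqrt (4 / c)"]) auto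
  moreover have "(\<gamma> \<longlongrightarrow> \<gamma> 0) (at_right 0)"
    unfolding \<gamma>_def by (intro tendsto_intros) auto
  ultimately have "\<gamma> 0 \<in> Omega1 c"
    by (intro Lim_in_closed_set[where F = "at_right 0"]) (auto simp: Omega1_def)
  then show ?thesis by (simp add: \<gamma>_def)
qed

lemma core_one_subset_Omega1:
  assumes c: "c > 0" shows "core c 1 \<subseteq> Omega1 c"
proof
  fix p assume p: "p \<in> core c 1"
  then obtain m n1 n2 where p_eq: "p = (m, n1, n2)" and m: "Im m = 0" "\<bar>Re m\<bar> \<le> sqrt (4 / c)"
    by (cases p) (auto simp: core_def corner_def mem_symmetric_cbox_complex)
  have "\<bar>Re m\<bar>\<^sup>2 \<le> (sqrt (4 / c))\<^sup>2" using m(2) by (intro power_mono) auto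
  then have "(Re m)\<^sup>2 \<le> 4 / c" using c by simp
  then have "c * (Re m)\<^sup>2 \<le> 4" using c by (simp add: field_simps)
  moreover have "p = (of_real (Re m), n1, n2)" using m(1) by (simp add: p_eq complex_eq_iff)
  moreover have "p \<in> level_curve c 1" using p by (simp add: core_def)
  ultimately show "p \<in> Omega1 c"
    using real_point_in_Omega1[OF c, of "Re m" n1 n2] equilibrium_in_Omega1[OF c]
    by (cases "p = (0, 1, 0)") auto
qed

lemma norm_le_one_plus_norm_if_sum_squares_eq_one:
  fixes x y :: "'a::real_normed_field"
  assumes "x\<^sup>2 + y\<^sup>2 = 1" shows "norm y \<le> 1 + norm x"
proof (rule power2_le_imp_le)
  have y2: "y\<^sup>2 = 1 - x\<^sup>2" using assms by (simp add: algebra_simps)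
  have "(norm y)\<^sup>2 = norm (1 - x\<^sup>2)" by (simp add: norm_power flip: y2)
  also have "\<dots> \<le> 1 + (norm x)\<^sup>2" using norm_triangle_ineq4[of 1 "x\<^sup>2"] by (simp add: norm_power)
  also have "\<dots> \<le> (1 + norm x)\<^sup>2" by (simp add: power2_eq_square algebra_simps)
  finally show "(norm y)\<^sup>2 \<le> (1 + norm x)\<^sup>2" .
qed simp

lemma closed_cores:
  assumes c: "c > 0" shows "closed (Sigma {0..1} (core c))"
proof -
  have "Sigma {0..1} (core c) = {x. fst x \<in> {0..1} \<and>
      \<bar>Re (fst (snd x))\<bar> \<le> sqrt (4 / c) + sqrt (8 * (1 - (fst x)\<^sup>2) / c) \<and>
      \<bar>Im (fst (snd x))\<bar> \<le> sqrt (8 * (1 - (fst x)\<^sup>2) / c) \<and>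
      fst (snd (snd x)) = of_real (2 * (fst x)\<^sup>2 - 1) - of_real c / 2 * (fst (snd x))\<^sup>2 \<and>
      (fst (snd (snd x)))\<^sup>2 + (snd (snd (snd x)))\<^sup>2 = 1}"
    by (auto simp: core_def level_curve_def double_cover_def corner_def mem_symmetric_cbox_complex)
  also have "closed \<dots>"
    unfolding atLeastAtMost_iff
    by (intro closed_Collect_conj closed_Collect_le closed_Collect_eq continuous_intros) (use c in auto)
  finally show ?thesis .
qed

lemma bounded_cores:
  assumes c: "c > 0" shows "bounded (Sigma {0..1} (core c))"
proof -
  define B where "B = sqrt (4 / c) + 2 * sqrt (8 / c)"
  define R where "R = 1 + c / 2 * B\<^sup>2"
  have "Sigma {0..1} (core c) \<subseteq> cbox 0 1 \<times> (cball 0 B \<times> (cball 0 R \<times> cball 0 (1 + R)))"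
  proof
    fix x assume "x \<in> Sigma {0..1} (core c)"
    then obtain k m n1 n2 where x: "x = (k, m, n1, n2)" and k: "k \<in> {0..1}"
      and p: "(m, n1, n2) \<in> core c k" by (cases x) auto
    define a where "a = 2 * k\<^sup>2 - 1"
    define r where "r = sqrt (8 * (1 - k\<^sup>2) / c)"
    have "r \<le> sqrt (8 / c)" using c k unfolding r_def
      by (intro real_sqrt_le_mono) (simp add: divide_right_mono)
    moreover have "\<bar>Re m\<bar> \<le> sqrt (4 / c) + r" "\<bar>Im m\<bar> \<le> r"
      using p by (auto simp: core_def corner_def mem_symmetric_cbox_complex r_def)
    ultimately have "norm m \<le> B" using cmod_le[of m] by (simp add: B_def)
    then have "(norm m)\<^sup>2 \<le> B\<^sup>2" by (simp add: power_mono)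
    have "\<bar>a\<bar> \<le> 1" using k by (auto simp: a_def abs_le_iff power_le_one)
    have "n1 = of_real a - of_real c / 2 * m\<^sup>2" and sq: "n1\<^sup>2 + n2\<^sup>2 = 1"
      using p by (auto simp: core_def level_curve_def double_cover_def a_def)
    then have "norm n1 \<le> \<bar>a\<bar> + c / 2 * (norm m)\<^sup>2"
      using c norm_triangle_ineq4[of "of_real a" "of_real c / 2 * m\<^sup>2"]
      by (simp add: norm_mult norm_power)
    also have "\<dots> \<le> R"
      using c \<open>\<bar>a\<bar> \<le> 1\<close> \<open>(norm m)\<^sup>2 \<le> B\<^sup>2\<close> by (auto simp: R_def intro!: add_mono)
    finally have "norm n1 \<le> R" .
    with norm_le_one_plus_norm_if_sum_squares_eq_one[OF sq] \<open>norm m \<le> B\<close> k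
    show "x \<in> cbox 0 1 \<times> (cball 0 B \<times> (cball 0 R \<times> cball 0 (1 + R)))"
      by (simp add: x)
  qed
  then show ?thesis by (rule bounded_subset[rotated]) (intro bounded_Times bounded_cbox bounded_cball)
qed

theorem lemma6:
  fixes c :: real
  assumes "c > 0"
  shows "\<forall>U. openin (top_of_set N1set) U \<and> Omega1 c \<subseteq> U \<longrightarrow>
           (\<exists>\<epsilon>>0. \<forall>k::real. 0 < k \<and> 0 < 1 - k \<and> 1 - k < \<epsilon> \<longrightarrow>
              pi1_generated_by (Gamma c k) (Gamma c k \<inter> U))"
proof (intro allI impI, elim conjE)
  fix U assume "openin (top_of_set N1set) U" and Omega: "Omega1 c \<subseteq> U"
  then obtain W where W: "open W" "U = N1set \<inter> W" by (auto simp: openin_open)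
  have "Sigma {0..1} (core c) `` {1} \<subseteq> W"
    using core_one_subset_Omega1[OF assms] Omega W by auto
  then obtain \<epsilon> where "\<epsilon> > 0" and \<epsilon>: "\<And>k. dist k 1 < \<epsilon> \<Longrightarrow> Sigma {0..1} (core c) `` {k} \<subseteq> W"
    using fibres_near_subset_open[OF _ \<open>open W\<close>] closed_cores[OF assms] bounded_cores[OF assms]
    by (meson compact_eq_bounded_closed)
  show "\<exists>\<epsilon>>0. \<forall>k::real. 0 < k \<and> 0 < 1 - k \<and> 1 - k < \<epsilon> \<longrightarrow>
          pi1_generated_by (Gamma c k) (Gamma c k \<inter> U)"
  proof (intro exI[of _ \<epsilon>] conjI allI impI \<open>\<epsilon> > 0\<close>, elim conjE)
    fix k :: real assume k: "0 < k" "0 < 1 - k" "1 - k < \<epsilon>"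
    have "core c k \<subseteq> W" using \<epsilon>[of k] k by (auto simp: dist_real_def)
    moreover have "core c k \<subseteq> Gamma c k" "Gamma c k \<subseteq> N1set"
      using k Gamma_eq_level_curve[of k c] level_curve_subset_N1set[of c k] by (auto simp: core_def)
    ultimately have "core c k \<subseteq> Gamma c k \<inter> U" using W by auto
    then show "pi1_generated_by (Gamma c k) (Gamma c k \<inter> U)"
      using pi1_Gamma_generated_by_core[OF assms] k by simp
  qed
qed

end
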